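(* Let $A=\mathbb{Z}_2^n\times A_{2'}$, where $n\ge 1$ and $A_{2'}$ is a finite abelian group of odd order. Then a subgroup $H$ of $A$ is a subgroup perfect code of $A$ if and only if either $|H|$ is even or $H=\{0\}\times A_{2'}$.
   Context: Groups are written additively with identity $0$. An element $x\in A$ is a square if $x=2y$ for some $y\in A$; a subset is square-free if it contains no squares. For a square-free $T\subseteq A$, the Cayley sum graph $\mathrm{CayS}(A,T)$ is the simple graph with vertex set $A$ in which distinct $x,y$ are adjacent iff $x+y\in T$. A subset $C$ of the vertex set of a graph is a perfect code if every vertex is at distance at most one from exactly one vertex of $C$. A subgroup $H$ of $A$ is a subgroup perfect code of $A$ if $H$ is a perfect code of $\mathrm{CayS}(A,T)$ for some square-free $T\subseteq A$ (the empty set allowed). *)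

theory Defs
  imports "HOL-Analysis.Analysis" "HOL-Library.Z2"
begin

text \<open>Additive (type-class) abelian groups; the whole type is the group.\<close>

definition is_square :: "'a::ab_group_add \<Rightarrow> bool" where
  "is_square x \<longleftrightarrow> (\<exists>y. x = y + y)"

definition square_free :: "'a::ab_group_add set \<Rightarrow> bool" where
  "square_free T \<longleftrightarrow> (\<forall>x\<in>T. \<not> is_square x)"

definition cays_adj :: "'a::ab_group_add set \<Rightarrow> 'a \<Rightarrow> 'a \<Rightarrow> bool" where
  "cays_adj T x y \<longleftrightarrow> x \<noteq> y \<and> x + y \<in> T"

definition perfect_code :: "'v set \<Rightarrow> ('v \<Rightarrow> 'v \<Rightarrow> bool) \<Rightarrow> 'v set \<Rightarrow> bool" where
  "perfect_code V adj C \<longleftrightarrow> C \<subseteq> V \<and> (\<forall>v\<in>V. \<exists>!c. c \<in> C \<and> (c = v \<or> adj c v))"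

definition is_subgroup :: "'a::ab_group_add set \<Rightarrow> bool" where
  "is_subgroup H \<longleftrightarrow> 0 \<in> H \<and> (\<forall>x\<in>H. \<forall>y\<in>H. x + y \<in> H) \<and> (\<forall>x\<in>H. - x \<in> H)"

definition subgroup_perfect_code :: "'a::ab_group_add set \<Rightarrow> bool" where
  "subgroup_perfect_code H \<longleftrightarrow> is_subgroup H \<and>
     (\<exists>T. square_free T \<and> perfect_code UNIV (cays_adj T) H)"

end

theory Submission
  imports Defs
begin

text \<open>
  In every abelian group a subgroup \<open>H\<close> is a subgroup perfect code iff each nontrivial coset
  of \<open>H\<close> contains a non-square: a square-free connection set is then obtained by choosing one
  non-square per coset. Since the squares form a subgroup, this holds iff \<open>H\<close> contains a
  non-square or \<open>H\<close> is the subgroup of squares. In \<open>\<int>\<^sub>2\<^sup>n \<times> A\<^sub>2\<^sub>'\<close> the squares are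
  \<open>{0} \<times> A\<^sub>2\<^sub>'\<close>, which has no element of order 2. A finite subgroup has even order iff it has
  an element of order 2, and if it has none, doubling permutes it, so all its elements are
  squares; hence \<open>H\<close> contains a non-square iff \<open>|H|\<close> is even.
\<close>

instance bit :: finite
proof
  show "finite (UNIV :: bit set)"
    by (rule finite_subset[of _ "{0, 1}"]) (auto intro: bit.exhaust)
qed

lemma even_card_if_fixpoint_free_involution:
  assumes "finite X" and "\<And>x. x \<in> X \<Longrightarrow> f x \<in> X \<and> f x \<noteq> x \<and> f (f x) = x"
  shows "even (card X)"
  using assms
proof (induction X rule: finite_psubset_induct)
  case (psubset X)
  show ?case
  proof (cases "X = {}")
    case False
    then obtain x where x: "x \<in> X" by blast
    let ?Y = "X - {x, f x}"
    have fx: "f x \<in> X" "f x \<noteq> x" "f (f x) = x"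
      using psubset.prems x by auto
    have "even (card ?Y)"
    proof (rule psubset.IH)
      show "?Y \<subset> X"
        using x by auto
      fix y assume "y \<in> ?Y"
      then have y: "y \<in> X" "y \<noteq> x" "y \<noteq> f x"
        by auto
      then have "f y \<in> X" "f y \<noteq> y" "f (f y) = y"
        using psubset.prems by auto
      then show "f y \<in> ?Y \<and> f y \<noteq> y \<and> f (f y) = y"
        using y fx(3) by auto
    qed
    moreover have "card ?Y = card X - card {x, f x}" "card {x, f x} \<le> card X"
      using psubset.hyps x fx(1) by (auto intro: card_Diff_subset card_mono)
    moreover have "card {x, f x} = 2"
      using fx by simp
    ultimately show ?thesis
      by presburger
  qed simp
qed

lemma is_subgroup_zero: "is_subgroup H \<Longrightarrow> 0 \<in> H"
  unfolding is_subgroup_def by blast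

lemma is_subgroup_add: "is_subgroup H \<Longrightarrow> x \<in> H \<Longrightarrow> y \<in> H \<Longrightarrow> x + y \<in> H"
  unfolding is_subgroup_def by blast

lemma is_subgroup_uminus: "is_subgroup H \<Longrightarrow> x \<in> H \<Longrightarrow> - x \<in> H"
  unfolding is_subgroup_def by blast

lemma is_subgroup_diff: "is_subgroup H \<Longrightarrow> x \<in> H \<Longrightarrow> y \<in> H \<Longrightarrow> x - y \<in> H"
  by (metis diff_conv_add_uminus is_subgroup_add is_subgroup_uminus)

lemma is_subgroup_UNIV: "is_subgroup UNIV"
  unfolding is_subgroup_def by blast

lemma is_square_add: "is_square x \<Longrightarrow> is_square y \<Longrightarrow> is_square (x + y)"
  unfolding is_square_def by (metis add.assoc add.left_commute)

lemma is_square_diff: "is_square x \<Longrightarrow> is_square y \<Longrightarrow> is_square (x - y)"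
  unfolding is_square_def by (metis add_diff_add diff_conv_add_uminus)

lemma perfect_code_cays_adj_if_transversal:
  assumes H: "is_subgroup H" and "T \<inter> H = {}"
    and transversal: "\<And>v. v \<notin> H \<Longrightarrow> \<exists>!t. t \<in> T \<and> t - v \<in> H"
  shows "perfect_code UNIV (cays_adj T) H"
  unfolding perfect_code_def cays_adj_def
proof (intro conjI ballI)
  fix v
  show "\<exists>!c. c \<in> H \<and> (c = v \<or> c \<noteq> v \<and> c + v \<in> T)"
  proof (cases "v \<in> H")
    case True
    then have "c + v \<notin> T" if "c \<in> H" for c
      using is_subgroup_add[OF H that] \<open>T \<inter> H = {}\<close> by blast
    then show ?thesis
      using True by blast
  next
    case False
    then obtain t where t: "t \<in> T" "t - v \<in> H"
      and unique: "\<And>t'. t' \<in> T \<Longrightarrow> t' - v \<in> H \<Longrightarrow> t' = t"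
      using transversal by metis
    show ?thesis
    proof (rule ex1I[of _ "t - v"])
      show "t - v \<in> H \<and> (t - v = v \<or> t - v \<noteq> v \<and> t - v + v \<in> T)"
        using t False by auto
      fix c assume "c \<in> H \<and> (c = v \<or> c \<noteq> v \<and> c + v \<in> T)"
      then have "c + v \<in> T" "(c + v) - v \<in> H"
        using False by auto
      then show "c = t - v"
        using unique by (metis add_diff_cancel_right')
    qed
  qed
qed simp

lemma subgroup_perfect_code_iff_nonsquare_cosets:
  assumes H: "is_subgroup H"
  shows "subgroup_perfect_code H \<longleftrightarrow> (\<forall>x. x \<notin> H \<longrightarrow> (\<exists>h\<in>H. \<not> is_square (x + h)))"
proof
  assume "subgroup_perfect_code H"
  then obtain T where "square_free T" and code: "perfect_code UNIV (cays_adj T) H"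
    unfolding subgroup_perfect_code_def by blast
  show "\<forall>x. x \<notin> H \<longrightarrow> (\<exists>h\<in>H. \<not> is_square (x + h))"
  proof (intro allI impI)
    fix x assume "x \<notin> H"
    obtain c where "c \<in> H" "c = x \<or> cays_adj T c x"
      using code unfolding perfect_code_def by blast
    then have "c \<in> H" "c + x \<in> T"
      using \<open>x \<notin> H\<close> unfolding cays_adj_def by auto
    then show "\<exists>h\<in>H. \<not> is_square (x + h)"
      using \<open>square_free T\<close> unfolding square_free_def by (metis add.commute)
  qed
next
  assume nonsquare: "\<forall>x. x \<notin> H \<longrightarrow> (\<exists>h\<in>H. \<not> is_square (x + h))"
  define r where "r x = (SOME y. y - x \<in> H \<and> \<not> is_square y)" for x
  have r: "r x - x \<in> H \<and> \<not> is_square (r x)" if "x \<notin> H" for x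
  proof -
    obtain h where "h \<in> H" "\<not> is_square (x + h)"
      using nonsquare \<open>x \<notin> H\<close> by blast
    then have "(x + h) - x \<in> H \<and> \<not> is_square (x + h)"
      by simp
    then show ?thesis
      unfolding r_def by (rule someI)
  qed
  \<comment> \<open>\<open>r\<close> picks the same non-square for the whole coset, since the predicate under \<open>SOME\<close> only depends on the coset.\<close>
  have r_coset: "r y = r x" if "y - x \<in> H" for x y
  proof -
    have "z - y \<in> H \<longleftrightarrow> z - x \<in> H" for z
      using is_subgroup_add[OF H _ that] is_subgroup_diff[OF H _ that]
      by (metis diff_add_cancel diff_diff_eq2)
    then show ?thesis
      unfolding r_def by simp
  qed
  define T where "T = r ` (- H)"
  have "square_free T"
    unfolding square_free_def T_def using r by auto
  moreover have "T \<inter> H = {}"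
    unfolding T_def using r is_subgroup_diff[OF H] by (fastforce simp: diff_diff_eq2)
  moreover have "\<exists>!t. t \<in> T \<and> t - v \<in> H" if "v \<notin> H" for v
  proof (rule ex1I[of _ "r v"])
    show "r v \<in> T \<and> r v - v \<in> H"
      unfolding T_def using r \<open>v \<notin> H\<close> by auto
    fix t assume "t \<in> T \<and> t - v \<in> H"
    then obtain y where y: "y \<notin> H" "t = r y" "r y - v \<in> H"
      unfolding T_def by auto
    have "(r y - y) - (r y - v) \<in> H"
      using r[OF \<open>y \<notin> H\<close>] y(3) is_subgroup_diff[OF H] by blast
    then show "t = r v"
      using r_coset y(2) by simp
  qed
  ultimately show "subgroup_perfect_code H"
    unfolding subgroup_perfect_code_def
    using H perfect_code_cays_adj_if_transversal by blast
qed

lemma nonsquare_cosets_iff: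
  assumes H: "is_subgroup H"
  shows "(\<forall>x. x \<notin> H \<longrightarrow> (\<exists>h\<in>H. \<not> is_square (x + h))) \<longleftrightarrow>
    (\<exists>t\<in>H. \<not> is_square t) \<or> H = {x. is_square x}"
proof
  assume nonsquare: "\<forall>x. x \<notin> H \<longrightarrow> (\<exists>h\<in>H. \<not> is_square (x + h))"
  have "H = {x. is_square x}" if squares_H: "H \<subseteq> {x. is_square x}"
  proof -
    have "x \<in> H" if "is_square x" for x
    proof (rule ccontr)
      assume "x \<notin> H"
      then obtain h where "h \<in> H" "\<not> is_square (x + h)"
        using nonsquare by blast
      then show False
        using is_square_add[OF \<open>is_square x\<close>] squares_H by blast
    qed
    then show ?thesis
      using squares_H by blast
  qed
  then show "(\<exists>t\<in>H. \<not> is_square t) \<or> H = {x. is_square x}"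
    by blast
next
  assume nonsquare_or_squares: "(\<exists>t\<in>H. \<not> is_square t) \<or> H = {x. is_square x}"
  show "\<forall>x. x \<notin> H \<longrightarrow> (\<exists>h\<in>H. \<not> is_square (x + h))"
  proof (intro allI impI)
    fix x assume "x \<notin> H"
    show "\<exists>h\<in>H. \<not> is_square (x + h)"
    proof (cases "is_square x")
      case False
      then show ?thesis
        using is_subgroup_zero[OF H] by (intro bexI[of _ 0]) auto
    next
      case True
      then obtain t where "t \<in> H" "\<not> is_square t"
        using nonsquare_or_squares \<open>x \<notin> H\<close> by blast
      moreover have "\<not> is_square (x + t)"
        using is_square_diff[of "x + t" x] True \<open>\<not> is_square t\<close> by auto
      ultimately show ?thesis
        by blast
    qed
  qed
qed

lemma subgroup_perfect_code_iff:
  assumes "is_subgroup H"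
  shows "subgroup_perfect_code H \<longleftrightarrow> (\<exists>t\<in>H. \<not> is_square t) \<or> H = {x. is_square x}"
  unfolding subgroup_perfect_code_iff_nonsquare_cosets[OF assms]
  by (rule nonsquare_cosets_iff[OF assms])

lemma even_card_subgroup_iff:
  assumes "finite H" and H: "is_subgroup H"
  shows "even (card H) \<longleftrightarrow> (\<exists>t\<in>H. t \<noteq> 0 \<and> t + t = 0)"
proof
  assume "even (card H)"
  show "\<exists>t\<in>H. t \<noteq> 0 \<and> t + t = 0"
  proof (rule ccontr)
    assume "\<not> (\<exists>t\<in>H. t \<noteq> 0 \<and> t + t = 0)"
    then have "- x \<noteq> x" if "x \<in> H - {0}" for x
      using that by (metis DiffD1 DiffD2 add.right_inverse singletonI)
    then have "even (card (H - {0}))"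
      using \<open>finite H\<close> is_subgroup_uminus[OF H]
      by (intro even_card_if_fixpoint_free_involution[where f = uminus]) auto
    moreover have "card H = Suc (card (H - {0}))"
      using \<open>finite H\<close> is_subgroup_zero[OF H] by (metis card_Suc_Diff1)
    ultimately show False
      using \<open>even (card H)\<close> by simp
  qed
next
  assume "\<exists>t\<in>H. t \<noteq> 0 \<and> t + t = 0"
  then obtain t where "t \<in> H" "t \<noteq> 0" "t + t = 0" by blast
  have "x + t \<in> H \<and> x + t \<noteq> x \<and> x + t + t = x" if "x \<in> H" for x
    using is_subgroup_add[OF H that \<open>t \<in> H\<close>] \<open>t \<noteq> 0\<close> \<open>t + t = 0\<close>
    by (simp add: add.assoc)
  then show "even (card H)"
    by (rule even_card_if_fixpoint_free_involution[OF \<open>finite H\<close>, where f = "\<lambda>x. x + t"])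
qed

lemma image_double_subgroup_eq:
  assumes "finite H" and H: "is_subgroup H"
    and no_involution: "\<And>t. t \<in> H \<Longrightarrow> t + t = 0 \<Longrightarrow> t = 0"
  shows "(\<lambda>y. y + y) ` H = H"
proof (rule endo_inj_surj[OF \<open>finite H\<close>])
  show "(\<lambda>y. y + y) ` H \<subseteq> H"
    using is_subgroup_add[OF H] by blast
  show "inj_on (\<lambda>y. y + y) H"
  proof (rule inj_onI)
    fix y z assume "y \<in> H" "z \<in> H" "y + y = z + z"
    then have "(y - z) + (y - z) = 0" "y - z \<in> H"
      using is_subgroup_diff[OF H] by (auto simp: algebra_simps)
    then show "y = z"
      using no_involution by (metis right_minus_eq)
  qed
qed

lemma even_card_subgroup_iff_nonsquare:
  fixes H :: "'a::ab_group_add set"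
  assumes "finite H" and H: "is_subgroup H"
    and square_involution: "\<And>t :: 'a. is_square t \<Longrightarrow> t + t = 0 \<Longrightarrow> t = 0"
  shows "even (card H) \<longleftrightarrow> (\<exists>t\<in>H. \<not> is_square t)"
proof
  assume "even (card H)"
  then obtain t where "t \<in> H" "t \<noteq> 0" "t + t = 0"
    using even_card_subgroup_iff[OF assms(1,2)] by blast
  then show "\<exists>t\<in>H. \<not> is_square t"
    using square_involution by metis
next
  assume "\<exists>t\<in>H. \<not> is_square t"
  moreover have "is_square t" if "t \<in> H" "\<not> (\<exists>u\<in>H. u \<noteq> 0 \<and> u + u = 0)" for t
    using image_double_subgroup_eq[OF assms(1,2)] that unfolding is_square_def by blast
  ultimately show "even (card H)"
    using even_card_subgroup_iff[OF assms(1,2)] by blast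
qed

lemma odd_card_no_involution:
  assumes "finite (UNIV :: 'a::ab_group_add set)" and "odd CARD('a)" and "x + x = 0"
  shows "x = (0 :: 'a)"
  using even_card_subgroup_iff[OF assms(1) is_subgroup_UNIV] assms(2,3) by blast

lemma odd_card_is_square:
  assumes "finite (UNIV :: 'a::ab_group_add set)" and "odd CARD('a)"
  shows "is_square (x :: 'a)"
  using image_double_subgroup_eq[OF assms(1) is_subgroup_UNIV] odd_card_no_involution[OF assms]
  unfolding is_square_def by (metis UNIV_I imageE)

lemma is_square_bitvec_prod_iff:
  fixes p :: "(bit, 'n::finite) vec \<times> 'b::ab_group_add"
  assumes "finite (UNIV :: 'b set)" and "odd CARD('b)"
  shows "is_square p \<longleftrightarrow> fst p = 0"
proof
  assume "is_square p"
  then show "fst p = 0"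
    unfolding is_square_def by (auto simp: vec_eq_iff)
next
  assume "fst p = 0"
  obtain c where "snd p = c + c"
    using odd_card_is_square[OF assms] unfolding is_square_def by blast
  then have "p = (0, c) + (0, c)"
    using \<open>fst p = 0\<close> by (simp add: prod_eq_iff)
  then show "is_square p"
    unfolding is_square_def by blast
qed

theorem proposition3p10:
  fixes H :: "((bit, 'n::finite) vec \<times> 'b::ab_group_add) set"
  assumes "finite (UNIV :: 'b set)"
    and "odd (CARD('b))"
    and "is_subgroup H"
  shows "subgroup_perfect_code H \<longleftrightarrow> even (card H) \<or> H = {0} \<times> (UNIV :: 'b set)"
proof -
  have squares: "{p :: (bit, 'n) vec \<times> 'b. is_square p} = {0} \<times> UNIV"
    using is_square_bitvec_prod_iff[OF assms(1,2)] by fastforce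
  have "finite H"
    using assms(1) by (simp add: finite_prod rev_finite_subset[of UNIV])
  moreover have "p = 0" if "is_square p" "p + p = 0" for p :: "(bit, 'n) vec \<times> 'b"
    using that odd_card_no_involution[OF assms(1,2), of "snd p"] squares
    by (auto simp: prod_eq_iff)
  ultimately have "even (card H) \<longleftrightarrow> (\<exists>t\<in>H. \<not> is_square t)"
    by (rule even_card_subgroup_iff_nonsquare[OF _ assms(3)])
  then show ?thesis
    unfolding subgroup_perfect_code_iff[OF assms(3)] squares by simp
qed

end
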